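(* Let $(\mathcal A,\jmath)_K$ be a $\mathrm{C}^*$-net bundle and let $(F;\tilde o,o)$ be a $1$-simplex in the domain of its Čech cocycle, i.e. there is a ${}^*$-isomorphism $\zeta^F_{\tilde oo}:\mathcal A^F_o\to\mathcal A^F_{\tilde o}$ with $\zeta^F_{\tilde oo}\circ\jmath_{oa}=\jmath_{\tilde oa}$ for all $a\in F$. Then $\zeta^F_{\tilde oo}=\jmath_{\tilde oa}\circ\jmath_{ao}$ for all $a\in F$, and $\jmath_{a_2o}\circ\jmath_{oa_1}=\jmath_{a_2\tilde o}\circ\jmath_{\tilde oa_1}$ for all $a_1,a_2\in F$.
   Context: A $\mathrm{C}^*$-net bundle $(\mathcal A,\jmath)_K$ over a poset $K$: unital $\mathrm{C}^*$-algebras $\mathcal A_o$ and ${}^*$-isomorphisms $\jmath_{oa}:\mathcal A_a\to\mathcal A_o$ ($a\le o$) with $\jmath_{oa}\circ\jmath_{ae}=\jmath_{oe}$; for $a\le o$ one writes $\jmath_{ao}:=\jmath_{oa}^{-1}$. For nonempty $F\subseteq K$ and $o,\tilde o\in K$, $(F;\tilde o,o)$ is a $1$-simplex of $\Sigma^\circ_*(K)$ when every element of $F$ is $\le o$ and $\le\tilde o$. $\mathcal A^F_o$ is the $\mathrm{C}^*$-subalgebra of $\mathcal A_o$ generated by the $\jmath_{oa}(\mathcal A_a)$, $a\in F$ (for a net bundle it equals $\mathcal A_o$). The domain of the Čech cocycle is the largest symmetric subsimplicial set of $\Sigma^\circ_*(K)$ on whose $1$-simplices $(F;\tilde o,o)$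 such isomorphisms $\zeta^F_{\tilde oo}$ exist. *)

theory Defs
  imports Complex_Main
begin

record 'x calg =
  ca_carrier :: "'x set"
  ca_add :: "'x \<Rightarrow> 'x \<Rightarrow> 'x"
  ca_smul :: "complex \<Rightarrow> 'x \<Rightarrow> 'x"
  ca_zero :: "'x"
  ca_mul :: "'x \<Rightarrow> 'x \<Rightarrow> 'x"
  ca_one :: "'x"
  ca_star :: "'x \<Rightarrow> 'x"
  ca_norm :: "'x \<Rightarrow> real"

definition ca_sub :: "'x calg \<Rightarrow> 'x \<Rightarrow> 'x \<Rightarrow> 'x" where
  "ca_sub A x y = ca_add A x (ca_smul A (-1) y)"

definition unital_cstar_algebra :: "'x calg \<Rightarrow> bool" where
  "unital_cstar_algebra A \<longleftrightarrow>
    (let C = ca_carrier A; p = ca_add A; s = ca_smul A; z = ca_zero A;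
         m = ca_mul A; u = ca_one A; st = ca_star A; n = ca_norm A in
     \<comment> \<open>complex vector space\<close>
     z \<in> C \<and> u \<in> C \<and>
     (\<forall>x\<in>C. \<forall>y\<in>C. p x y \<in> C \<and> m x y \<in> C) \<and>
     (\<forall>c. \<forall>x\<in>C. s c x \<in> C) \<and> (\<forall>x\<in>C. st x \<in> C) \<and>
     (\<forall>x\<in>C. \<forall>y\<in>C. \<forall>w\<in>C. p (p x y) w = p x (p y w)) \<and>
     (\<forall>x\<in>C. \<forall>y\<in>C. p x y = p y x) \<and>
     (\<forall>x\<in>C. p z x = x) \<and>
     (\<forall>x\<in>C. p x (s (-1) x) = z) \<and>
     (\<forall>x\<in>C. s 1 x = x) \<and>
     (\<forall>a b. \<forall>x\<in>C. s a (s b x) = s (a * b) x) \<and>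
     (\<forall>a b. \<forall>x\<in>C. s (a + b) x = p (s a x) (s b x)) \<and>
     (\<forall>a. \<forall>x\<in>C. \<forall>y\<in>C. s a (p x y) = p (s a x) (s a y)) \<and>
     \<comment> \<open>associative unital algebra\<close>
     (\<forall>x\<in>C. \<forall>y\<in>C. \<forall>w\<in>C. m (m x y) w = m x (m y w)) \<and>
     (\<forall>x\<in>C. \<forall>y\<in>C. \<forall>w\<in>C. m x (p y w) = p (m x y) (m x w)) \<and>
     (\<forall>x\<in>C. \<forall>y\<in>C. \<forall>w\<in>C. m (p x y) w = p (m x w) (m y w)) \<and>
     (\<forall>a. \<forall>x\<in>C. \<forall>y\<in>C. m (s a x) y = s a (m x y) \<and> m x (s a y) = s a (m x y)) \<and>
     (\<forall>x\<in>C. m u x = x \<and> m x u = x) \<and>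
     \<comment> \<open>involution\<close>
     (\<forall>x\<in>C. st (st x) = x) \<and>
     (\<forall>x\<in>C. \<forall>y\<in>C. st (p x y) = p (st x) (st y)) \<and>
     (\<forall>a. \<forall>x\<in>C. st (s a x) = s (cnj a) (st x)) \<and>
     (\<forall>x\<in>C. \<forall>y\<in>C. st (m x y) = m (st y) (st x)) \<and>
     \<comment> \<open>submultiplicative norm\<close>
     (\<forall>x\<in>C. 0 \<le> n x \<and> (n x = 0 \<longleftrightarrow> x = z)) \<and>
     (\<forall>x\<in>C. \<forall>y\<in>C. n (p x y) \<le> n x + n y) \<and>
     (\<forall>a. \<forall>x\<in>C. n (s a x) = cmod a * n x) \<and>
     (\<forall>x\<in>C. \<forall>y\<in>C. n (m x y) \<le> n x * n y) \<and>
     \<comment> \<open>completeness\<close>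
     (\<forall>X::nat \<Rightarrow> 'x. (\<forall>k. X k \<in> C) \<and>
          (\<forall>e>0. \<exists>N. \<forall>i\<ge>N. \<forall>j\<ge>N. n (ca_sub A (X i) (X j)) < e) \<longrightarrow>
          (\<exists>x\<in>C. \<forall>e>0. \<exists>N. \<forall>i\<ge>N. n (ca_sub A (X i) x) < e)) \<and>
     \<comment> \<open>C*-identity\<close>
     (\<forall>x\<in>C. n (m (st x) x) = n x ^ 2))"

definition star_iso :: "'x calg \<Rightarrow> 'x calg \<Rightarrow> ('x \<Rightarrow> 'x) \<Rightarrow> bool" where
  "star_iso A B f \<longleftrightarrow>
     bij_betw f (ca_carrier A) (ca_carrier B) \<and>
     (\<forall>x\<in>ca_carrier A. \<forall>y\<in>ca_carrier A.
        f (ca_add A x y) = ca_add B (f x) (f y) \<and> f (ca_mul A x y) = ca_mul B (f x) (f y)) \<and>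
     (\<forall>c. \<forall>x\<in>ca_carrier A. f (ca_smul A c x) = ca_smul B c (f x)) \<and>
     (\<forall>x\<in>ca_carrier A. f (ca_star A x) = ca_star B (f x))"

text \<open>C*-net bundle over the poset K; j p a : A_a -> A_p for a <= p.\<close>
definition cstar_net_bundle ::
  "'o::order set \<Rightarrow> ('o \<Rightarrow> 'x calg) \<Rightarrow> ('o \<Rightarrow> 'o \<Rightarrow> 'x \<Rightarrow> 'x) \<Rightarrow> bool" where
  "cstar_net_bundle K A j \<longleftrightarrow>
     (\<forall>p\<in>K. unital_cstar_algebra (A p)) \<and>
     (\<forall>p\<in>K. \<forall>a\<in>K. a \<le> p \<longrightarrow> star_iso (A a) (A p) (j p a)) \<and>
     (\<forall>p\<in>K. \<forall>a\<in>K. \<forall>e\<in>K. e \<le> a \<and> a \<le> p \<longrightarrow>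
        (\<forall>x\<in>ca_carrier (A e). j p a (j a e x) = j p e x))"

text \<open>j_{ao} is the inverse of j_{oa} for a <= o.\<close>
definition jinv :: "('o \<Rightarrow> 'x calg) \<Rightarrow> ('o \<Rightarrow> 'o \<Rightarrow> 'x \<Rightarrow> 'x) \<Rightarrow> 'o \<Rightarrow> 'o \<Rightarrow> 'x \<Rightarrow> 'x" where
  "jinv A j a p = inv_into (ca_carrier (A a)) (j p a)"

text \<open>1-simplex (F; ot, o) of Sigma_*(K), with o renamed p.\<close>
definition one_simplex :: "'o::order set \<Rightarrow> 'o set \<Rightarrow> 'o \<Rightarrow> 'o \<Rightarrow> bool" where
  "one_simplex K F pt p \<longleftrightarrow> F \<noteq> {} \<and> F \<subseteq> K \<and> p \<in> K \<and> pt \<in> K \<and>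
     (\<forall>a\<in>F. a \<le> p \<and> a \<le> pt)"

definition cstar_subalgebra :: "'x calg \<Rightarrow> 'x set \<Rightarrow> bool" where
  "cstar_subalgebra A B \<longleftrightarrow> B \<subseteq> ca_carrier A \<and> ca_zero A \<in> B \<and>
     (\<forall>x\<in>B. \<forall>y\<in>B. ca_add A x y \<in> B \<and> ca_mul A x y \<in> B) \<and>
     (\<forall>c. \<forall>x\<in>B. ca_smul A c x \<in> B) \<and> (\<forall>x\<in>B. ca_star A x \<in> B) \<and>
     (\<forall>(X::nat \<Rightarrow> 'x) x. (\<forall>k. X k \<in> B) \<and> x \<in> ca_carrier A \<and>
        (\<forall>e>0. \<exists>N. \<forall>i\<ge>N. ca_norm A (ca_sub A (X i) x) < e) \<longrightarrow> x \<in> B)"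

definition generated_cstar :: "'x calg \<Rightarrow> 'x set \<Rightarrow> 'x set" where
  "generated_cstar A S = \<Inter> {B. cstar_subalgebra A B \<and> S \<subseteq> B}"

definition algF :: "('o \<Rightarrow> 'x calg) \<Rightarrow> ('o \<Rightarrow> 'o \<Rightarrow> 'x \<Rightarrow> 'x) \<Rightarrow> 'o set \<Rightarrow> 'o \<Rightarrow> 'x set" where
  "algF A j F p = generated_cstar (A p) (\<Union>a\<in>F. j p a ` ca_carrier (A a))"

end

theory Submission
  imports Defs
begin

text \<open>Every inclusion j(o,a) is a bijection, so an isomorphism \<zeta> intertwining j(o,a) with
  j(o',a) is forced to equal j(o',a) composed with the inverse of j(o,a) on the whole algebra
  at o, which contains the one generated by F; comparing these expressions for two points of F
  gives the cocycle identity.\<close>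

lemma jinv_mem:
  assumes "bij_betw (j p a) (ca_carrier (A a)) (ca_carrier (A p))" "y \<in> ca_carrier (A p)"
  shows "jinv A j a p y \<in> ca_carrier (A a)"
  using assms unfolding jinv_def by (meson bij_betw_apply bij_betw_inv_into)

lemma j_jinv:
  assumes "bij_betw (j p a) (ca_carrier (A a)) (ca_carrier (A p))" "y \<in> ca_carrier (A p)"
  shows "j p a (jinv A j a p y) = y"
  using assms unfolding jinv_def by (meson bij_betw_inv_into_right)

lemma jinv_j:
  assumes "bij_betw (j p a) (ca_carrier (A a)) (ca_carrier (A p))" "x \<in> ca_carrier (A a)"
  shows "jinv A j a p (j p a x) = x"
  using assms unfolding jinv_def by (meson bij_betw_inv_into_left)

lemma cstar_net_bundle_bij:
  assumes "cstar_net_bundle K A j" "p \<in> K" "a \<in> K" "a \<le> p"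
  shows "bij_betw (j p a) (ca_carrier (A a)) (ca_carrier (A p))"
  using assms unfolding cstar_net_bundle_def star_iso_def by blast

lemma cstar_subalgebra_carrier:
  assumes "unital_cstar_algebra A"
  shows "cstar_subalgebra A (ca_carrier A)"
  using assms unfolding unital_cstar_algebra_def cstar_subalgebra_def Let_def by simp

lemma generated_cstar_subset_carrier:
  assumes "unital_cstar_algebra A" "S \<subseteq> ca_carrier A"
  shows "generated_cstar A S \<subseteq> ca_carrier A"
  using assms cstar_subalgebra_carrier unfolding generated_cstar_def by blast

lemma algF_subset_carrier:
  assumes "cstar_net_bundle K A j" "p \<in> K" "F \<subseteq> K" "\<forall>a\<in>F. a \<le> p"
  shows "algF A j F p \<subseteq> ca_carrier (A p)"
proof -
  have "(\<Union>a\<in>F. j p a ` ca_carrier (A a)) \<subseteq> ca_carrier (A p)"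
    using assms cstar_net_bundle_bij by (fastforce simp: bij_betw_def)
  moreover have "unital_cstar_algebra (A p)"
    using assms(1,2) unfolding cstar_net_bundle_def by simp
  ultimately show ?thesis
    unfolding algF_def by (rule generated_cstar_subset_carrier[rotated])
qed

lemma intertwiner_eq_transport:
  assumes "bij_betw (j p a) (ca_carrier (A a)) (ca_carrier (A p))"
    and "\<forall>x\<in>ca_carrier (A a). \<zeta> (j p a x) = j pt a x"
    and "y \<in> ca_carrier (A p)"
  shows "\<zeta> y = j pt a (jinv A j a p y)"
  using assms jinv_mem j_jinv by metis

lemma jinv_transport_eq:
  assumes bij_p: "bij_betw (j p a2) (ca_carrier (A a2)) (ca_carrier (A p))"
    and bij_pt: "bij_betw (j pt a2) (ca_carrier (A a2)) (ca_carrier (A pt))"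
    and "j p a1 x \<in> ca_carrier (A p)"
    and "\<zeta> (j p a1 x) = j pt a1 x"
    and "\<forall>z\<in>ca_carrier (A a2). \<zeta> (j p a2 z) = j pt a2 z"
  shows "jinv A j a2 p (j p a1 x) = jinv A j a2 pt (j pt a1 x)"
proof -
  define z where "z = jinv A j a2 p (j p a1 x)"
  have z: "z \<in> ca_carrier (A a2)" "j p a2 z = j p a1 x"
    unfolding z_def using assms(3) bij_p jinv_mem j_jinv by metis+
  then have "j pt a2 z = j pt a1 x"
    using assms(4,5) by metis
  then show ?thesis
    using jinv_j[where j=j and A=A, OF bij_pt z(1)] by (simp add: z_def)
qed

theorem lemma5p5:
  fixes K :: "'o::order set" and A :: "'o \<Rightarrow> 'x calg" and j :: "'o \<Rightarrow> 'o \<Rightarrow> 'x \<Rightarrow> 'x"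
    and F :: "'o set" and pt p :: 'o and \<zeta> :: "'x \<Rightarrow> 'x"
  assumes "cstar_net_bundle K A j"
    and "one_simplex K F pt p"
    and "star_iso ((A p)\<lparr>ca_carrier := algF A j F p\<rparr>) ((A pt)\<lparr>ca_carrier := algF A j F pt\<rparr>) \<zeta>"
    and "\<forall>a\<in>F. \<forall>x\<in>ca_carrier (A a). \<zeta> (j p a x) = j pt a x"
  shows "(\<forall>a\<in>F. \<forall>x\<in>algF A j F p. \<zeta> x = j pt a (jinv A j a p x)) \<and>
         (\<forall>a1\<in>F. \<forall>a2\<in>F. \<forall>x\<in>ca_carrier (A a1).
            jinv A j a2 p (j p a1 x) = jinv A j a2 pt (j pt a1 x))"
proof -
  have simplex: "p \<in> K" "pt \<in> K" "F \<subseteq> K" "\<forall>a\<in>F. a \<le> p" "\<forall>a\<in>F. a \<le> pt"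
    using assms(2) unfolding one_simplex_def by auto
  have bij_p: "bij_betw (j p a) (ca_carrier (A a)) (ca_carrier (A p))"
    and bij_pt: "bij_betw (j pt a) (ca_carrier (A a)) (ca_carrier (A pt))" if "a \<in> F" for a
    using that simplex cstar_net_bundle_bij[OF assms(1)] by blast+
  have "\<zeta> x = j pt a (jinv A j a p x)" if "a \<in> F" "x \<in> algF A j F p" for a x
    using intertwiner_eq_transport[where j=j and A=A, OF bij_p] algF_subset_carrier[OF assms(1) simplex(1,3,4)]
      assms(4) that by blast
  moreover have "jinv A j a2 p (j p a1 x) = jinv A j a2 pt (j pt a1 x)"
    if "a1 \<in> F" "a2 \<in> F" "x \<in> ca_carrier (A a1)" for a1 a2 x
    using jinv_transport_eq[where j=j and A=A, OF bij_p bij_pt] bij_betw_apply[OF bij_p] assms(4) that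
    by blast
  ultimately show ?thesis by blast
qed

end
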